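(* Let $C_\bullet(\eta)$ be the chain complex with $C_n(\eta)=\mathrm{id}_L\otimes_R B_+^{\otimes_R n}\otimes_R\mathrm{id}_{\mathcal O}$ and differential $d(a_1\otimes\cdots\otimes a_n)=\sum_{i=1}^{n-1}(-1)^i a_1\otimes\cdots\otimes a_ia_{i+1}\otimes\cdots\otimes a_n$, and $C_\bullet^{(m)}(\eta)$ its subcomplex of internal degree $m$. Then for all $n\ge1$: $H_n(C_\bullet^{(n)}(\eta))\cong k$ for $n\in\{1,2\}$ and $0$ otherwise; $H_n(C_\bullet^{(n-1)}(\eta))\cong k$ for $n\in\{5,6\}$ and $0$ otherwise; $H_n(C_\bullet^{(n-2)}(\eta))\cong k$ for $n\in\{9,10\}$ and $0$ otherwise; $H_n(C_\bullet^{(n-3)}(\eta))\cong k$ for $n\in\{13,14\}$ and $0$ otherwise.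
   Context: Let $k$ be a field with $\operatorname{char}k\neq2,3$. Let $B$ be the graded $k$-algebra with $k$-basis $\mathrm{id}_L,\mathrm{id}_{\mathcal O},\theta$ (degree $0$) and $\eta,\xi,\xi_L$ (degree $1$), whose only nonzero products of basis elements are $\mathrm{id}_L\mathrm{id}_L=\mathrm{id}_L$, $\mathrm{id}_{\mathcal O}\mathrm{id}_{\mathcal O}=\mathrm{id}_{\mathcal O}$, $\mathrm{id}_L\xi_L=\xi_L\mathrm{id}_L=\xi_L$, $\mathrm{id}_{\mathcal O}\xi=\xi\mathrm{id}_{\mathcal O}=\xi$, $\mathrm{id}_L\eta=\eta\,\mathrm{id}_{\mathcal O}=\eta$, $\mathrm{id}_{\mathcal O}\theta=\theta\,\mathrm{id}_L=\theta$, $\theta\eta=\xi$, $\eta\theta=\xi_L$. Let $R=k\langle\mathrm{id}_L,\mathrm{id}_{\mathcal O}\rangle$ and $B_+=\langle\theta,\eta,\xi,\xi_L\rangle$; tensor products are over $R$. Thus $B_+^{\otimes_R n}$ has $k$-basis the words $a_1\otimes\cdots\otimes a_n$, $a_i\in\{\theta,\eta,\xi,\xi_L\}$, with the right idempotent of $a_i$ equal to the left idempotent of $a_{i+1}$, where (left, right) idempotents are $\theta:(\mathrm{id}_{\mathcal O},\mathrm{id}_L)$, $\eta:(\mathrm{id}_L,\mathrm{id}_{\mathcal O})$, $\xi:(\mathrm{id}_{\mathcal O},\mathrm{id}_{\mathcal O})$, $\xi_L:(\mathrm{id}_L,\mathrm{id}_L)$; $\mathrm{id}_L\otimes(\cdot)\otimes\mathrm{id}_{\mathcal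 O}$ selects words whose first letter has left idempotent $\mathrm{id}_L$ and whose last letter has right idempotent $\mathrm{id}_{\mathcal O}$. Internal degree of a word is the sum of the degrees of its letters. *)

theory Defs
  imports Main
begin

text \<open>The basis letters of the augmentation ideal B_+ and the two idempotents.\<close>
datatype letter = Theta | Eta | Xi | XiL
datatype idem = IdL | IdO

fun lidem :: "letter \<Rightarrow> idem" where
  "lidem Theta = IdO" | "lidem Eta = IdL" | "lidem Xi = IdO" | "lidem XiL = IdL"

fun ridem :: "letter \<Rightarrow> idem" where
  "ridem Theta = IdL" | "ridem Eta = IdO" | "ridem Xi = IdO" | "ridem XiL = IdL"

fun ldeg :: "letter \<Rightarrow> int" where
  "ldeg Theta = 0" | "ldeg Eta = 1" | "ldeg Xi = 1" | "ldeg XiL = 1"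

text \<open>Product of two basis letters of B_+ (None means the product is zero).\<close>
fun lmult :: "letter \<Rightarrow> letter \<Rightarrow> letter option" where
  "lmult Theta Eta = Some Xi"
| "lmult Eta Theta = Some XiL"
| "lmult _ _ = None"

text \<open>Basis words of id_L (x) B_+^{(x) n} (x) id_O: nonempty composable words starting at
  id_L and ending at id_O.\<close>
definition valid_word :: "letter list \<Rightarrow> bool" where
  "valid_word v \<longleftrightarrow> v \<noteq> [] \<and> lidem (hd v) = IdL \<and> ridem (last v) = IdO \<and>
     (\<forall>i. Suc i < length v \<longrightarrow> ridem (v ! i) = lidem (v ! Suc i))"

definition word_deg :: "letter list \<Rightarrow> int" where
  "word_deg v = (\<Sum>x\<leftarrow>v. ldeg x)"

definition basis_words :: "nat \<Rightarrow> int \<Rightarrow> letter list set" where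
  "basis_words n m = {v. length v = n \<and> valid_word v \<and> word_deg v = m}"

text \<open>Contraction a_1 .. a_i a_{i+1} .. a_n (i is 1-indexed, 1 \<le> i \<le> n-1).\<close>
definition contract :: "letter list \<Rightarrow> nat \<Rightarrow> letter list option" where
  "contract v i = (case lmult (v ! (i - 1)) (v ! i) of
      None \<Rightarrow> None
    | Some x \<Rightarrow> Some (take (i - 1) v @ x # drop (Suc i) v))"

definition incidence :: "letter list \<Rightarrow> letter list \<Rightarrow> 'k::field" where
  "incidence v w = (\<Sum>i\<in>{1..<length v}. if contract v i = Some w then (-1) ^ i else 0)"

text \<open>Chains of homological degree n and internal degree m, as k-valued functions on words
  supported on the basis words.\<close>
definition chains :: "nat \<Rightarrow> int \<Rightarrow> (letter list \<Rightarrow> 'k::field) set" where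
  "chains n m = {c. \<forall>w. c w \<noteq> 0 \<longrightarrow> w \<in> basis_words n m}"

definition bdry :: "(letter list \<Rightarrow> 'k::field) \<Rightarrow> (letter list \<Rightarrow> 'k)" where
  "bdry c = (\<lambda>w. \<Sum>v\<in>{v. length v = Suc (length w) \<and> valid_word v}. c v * incidence v w)"

definition cycles :: "nat \<Rightarrow> int \<Rightarrow> (letter list \<Rightarrow> 'k::field) set" where
  "cycles n m = {c \<in> chains n m. bdry c = (\<lambda>_. 0)}"

definition boundaries :: "nat \<Rightarrow> int \<Rightarrow> (letter list \<Rightarrow> 'k::field) set" where
  "boundaries n m = bdry ` chains (Suc n) m"

definition hclass :: "nat \<Rightarrow> int \<Rightarrow> (letter list \<Rightarrow> 'k::field) \<Rightarrow> (letter list \<Rightarrow> 'k) set" where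
  "hclass n m z = {z' \<in> cycles n m. (\<lambda>w. z w - z' w) \<in> boundaries n m}"

definition homology :: "nat \<Rightarrow> int \<Rightarrow> (letter list \<Rightarrow> 'k::field) set set" where
  "homology n m = hclass n m ` cycles n m"

definition homology_iso_field :: "'k::field itself \<Rightarrow> nat \<Rightarrow> int \<Rightarrow> bool" where
  "homology_iso_field _ n m \<longleftrightarrow>
     (\<exists>\<phi> :: (letter list \<Rightarrow> 'k) set \<Rightarrow> 'k.
        bij_betw \<phi> (homology n m) UNIV \<and>
        (\<forall>x\<in>cycles n m. \<forall>y\<in>cycles n m.
            \<phi> (hclass n m (\<lambda>w. x w + y w)) = \<phi> (hclass n m x) + \<phi> (hclass n m y)) \<and>
        (\<forall>a. \<forall>x\<in>cycles n m. \<phi> (hclass n m (\<lambda>w. a * x w)) = a * \<phi> (hclass n m x)))"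

definition homology_zero :: "'k::field itself \<Rightarrow> nat \<Rightarrow> int \<Rightarrow> bool" where
  "homology_zero _ n m \<longleftrightarrow> is_singleton (homology n m :: (letter list \<Rightarrow> 'k) set set)"

end

theory Submission
  imports Defs
begin

text \<open>
  We compute the homology of \<open>C_\<bullet>(\<eta>) = id_L \<otimes> B_+^{\<otimes> \<bullet>} \<otimes> id_O\<close> along the lines
  \<open>m = n - t\<close> by algebraic discrete Morse theory on the basis words.

  The combinatorial core is a matching on basis words. Compare a word with the periodic
  pattern \<open>\<eta> \<xi> \<theta> \<xi>_L \<eta> \<xi> \<theta> \<xi>_L \<dots>\<close>; if the first deviation is \<open>\<xi>_L = \<eta>\<theta>\<close> or \<open>\<xi> = \<theta>\<eta>\<close> in
  place of \<open>\<eta>\<close> resp. \<open>\<theta>\<close>, the word is matched with its expansion. The matching is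
  triangular with diagonal entries \<open>\<plusminus>1\<close>, so every chain is homologous to one vanishing on
  expandable words, and such a cycle is supported on the unmatched (critical) words, i.e.
  the initial segments of the pattern. The critical word of length \<open>n\<close> is a basis word of
  internal degree \<open>n - t\<close> exactly for \<open>n \<in> {4t + 1, 4t + 2}\<close>; this gives \<open>homology_line\<close>,
  and the main theorem is its instance \<open>t = 0, 1, 2, 3\<close>.
\<close>

section \<open>Words and contractions\<close>

lemma UNIV_letter: "(UNIV :: letter set) = {Theta, Eta, Xi, XiL}"
  by (auto intro: letter.exhaust)

lemma finite_words_of_length: "finite {v :: letter list. length v = n \<and> P v}"
proof (rule finite_subset)
  show "{v :: letter list. length v = n \<and> P v} \<subseteq> {xs. set xs \<subseteq> UNIV \<and> length xs = n}"
    by auto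
  show "finite {xs :: letter list. set xs \<subseteq> UNIV \<and> length xs = n}"
    by (rule finite_lists_length_eq) (simp add: UNIV_letter)
qed

lemma finite_basis_words: "finite (basis_words n m)"
  unfolding basis_words_def using finite_words_of_length by simp

definition composable :: "letter \<Rightarrow> letter \<Rightarrow> bool" where
  "composable a b \<longleftrightarrow> ridem a = lidem b"

lemma valid_word_iff_successively:
  "valid_word v \<longleftrightarrow>
     v \<noteq> [] \<and> lidem (hd v) = IdL \<and> ridem (last v) = IdO \<and> successively composable v"
  unfolding valid_word_def successively_conv_nth composable_def by auto

lemma lmult_SomeD:
  "lmult a b = Some c \<Longrightarrow> (a = Theta \<and> b = Eta \<and> c = Xi) \<or> (a = Eta \<and> b = Theta \<and> c = XiL)"
  by (cases a; cases b; auto)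

lemma lmult_product_absorbing:
  assumes "lmult a b = Some c"
  shows "lmult c d = None" and "lmult d c = None"
  using lmult_SomeD[OF assms] by (cases d; auto)+

lemma contract_append:
  "contract (p @ a # b # s) (Suc (length p)) = map_option (\<lambda>c. p @ c # s) (lmult a b)"
  unfolding contract_def by (auto simp: nth_append split: option.splits)

lemma split_at_position:
  assumes "1 \<le> i" "i < length x"
  shows "x = take (i - 1) x @ x ! (i - 1) # x ! i # drop (Suc i) x"
proof -
  have "x = take (i - 1) x @ x ! (i - 1) # drop (Suc (i - 1)) x"
    using assms by (intro id_take_nth_drop) simp
  moreover have "drop (Suc (i - 1)) x = x ! i # drop (Suc i) x"
    using assms by (simp add: Cons_nth_drop_Suc)
  ultimately show ?thesis by simp
qed

lemma contract_SomeE: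
  assumes "1 \<le> i" "i < length x" "contract x i = Some v"
  obtains p a b s c where "x = p @ a # b # s" "length p = i - 1" "lmult a b = Some c"
    "v = p @ c # s"
proof -
  from assms(3) obtain c where "lmult (x ! (i - 1)) (x ! i) = Some c"
    and "v = take (i - 1) x @ c # drop (Suc i) x"
    unfolding contract_def by (auto split: option.splits)
  then show ?thesis
    using that split_at_position[OF assms(1,2)] assms(1,2) by simp
qed

lemma valid_word_contract_iff:
  assumes "lmult a b = Some c"
  shows "valid_word (p @ a # b # s) \<longleftrightarrow> valid_word (p @ c # s)"
proof -
  have idem: "lidem a = lidem c" "ridem b = ridem c" "composable a b"
    using lmult_SomeD[OF assms] by (auto simp: composable_def)
  have "lidem (hd (p @ a # b # s)) = lidem (hd (p @ c # s))"
    using idem by (cases p) auto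
  moreover have "ridem (last (p @ a # b # s)) = ridem (last (p @ c # s))"
    using idem by (cases s rule: rev_cases) auto
  moreover have "successively composable (p @ [a, b] @ s) \<longleftrightarrow> successively composable (p @ [c] @ s)"
    using idem unfolding successively_append_iff by (cases s) (auto simp: composable_def)
  ultimately show ?thesis
    unfolding valid_word_iff_successively by simp
qed

lemma word_deg_contract:
  assumes "lmult a b = Some c"
  shows "word_deg (p @ a # b # s) = word_deg (p @ c # s)"
  using lmult_SomeD[OF assms] by (auto simp: word_deg_def)

lemma contract_preserves:
  assumes "1 \<le> i" "i < length x" "contract x i = Some v"
  shows "valid_word v = valid_word x \<and> length v = length x - 1 \<and> word_deg v = word_deg x"
proof -
  obtain p a b s c where "x = p @ a # b # s" "length p = i - 1" "lmult a b = Some c" "v = p @ c # s"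
    using contract_SomeE[OF assms] .
  then show ?thesis
    using valid_word_contract_iff[of a b c p s] word_deg_contract[of a b c p s] by simp
qed

section \<open>The differential squares to zero\<close>

definition contract2 :: "letter list \<Rightarrow> nat \<Rightarrow> nat \<Rightarrow> letter list option" where
  "contract2 x i i' = Option.bind (contract x i) (\<lambda>v. contract v i')"

text \<open>Contractions at two disjoint pairs of positions commute; in the second step the
  index of the right pair has shifted down by one.\<close>

lemma contract2_disjoint_append:
  "contract2 (p @ a # b # q @ c # d # s) (Suc (length (p @ a # b # q))) (Suc (length p))
   = contract2 (p @ a # b # q @ c # d # s) (Suc (length p)) (Suc (length (p @ a # q)))"
proof -
  have right: "contract (p @ a # b # q @ c # d # s) (Suc (length (p @ a # b # q)))
      = map_option (\<lambda>e. p @ a # b # q @ e # s) (lmult c d)"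
    using contract_append[of "p @ a # b # q" c d s] by simp
  have left: "contract (p @ a # b # q @ c # d # s) (Suc (length p))
      = map_option (\<lambda>f. p @ f # q @ c # d # s) (lmult a b)"
    using contract_append[of p a b "q @ c # d # s"] by simp
  have right': "contract (p @ f # q @ c # d # s) (Suc (Suc (length p + length q)))
      = map_option (\<lambda>e. p @ f # q @ e # s) (lmult c d)" for f
    using contract_append[of "p @ f # q" c d s] by simp
  show ?thesis
    unfolding contract2_def left right
    by (cases "lmult a b"; cases "lmult c d") (simp_all add: contract_append right')
qed

lemma split_at_two_positions:
  assumes "1 \<le> i'" "i' + 2 \<le> i" "i < length x"
  obtains p a b q c d s where "x = p @ a # b # q @ c # d # s"
    "length p = i' - 1" "length q = i - i' - 2"
proof -
  define y where "y = drop (Suc i') x"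
  have x: "x = take (i' - 1) x @ x ! (i' - 1) # x ! i' # y"
    unfolding y_def using assms by (intro split_at_position) auto
  have y: "y = take (i - i' - 2) y @ y ! (i - i' - 2) # y ! (i - i' - 1) # drop (i - i') y"
    using split_at_position[of "i - i' - 1" y] assms
    by (simp add: y_def Suc_diff_Suc numeral_2_eq_2)
  have "length (take (i' - 1) x) = i' - 1" "length (take (i - i' - 2) y) = i - i' - 2"
    using assms by (auto simp: y_def)
  then show ?thesis
    using that x y by metis
qed

lemma contract2_commute:
  assumes "1 \<le> i'" "i' + 2 \<le> i" "i < length x"
  shows "contract2 x i i' = contract2 x i' (i - 1)"
proof -
  obtain p a b q c d s where x: "x = p @ a # b # q @ c # d # s"
    and "length p = i' - 1" "length q = i - i' - 2"
    using split_at_two_positions[OF assms] .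
  then have "i = Suc (length (p @ a # b # q))" "i' = Suc (length p)"
    "i - 1 = Suc (length (p @ a # q))"
    using assms by auto
  then show ?thesis
    using contract2_disjoint_append[of p a b q c d s] x by simp
qed

lemma contract2_overlapping:
  assumes "1 \<le> i" "i < length x" "i' = i - 1 \<or> i' = i" "1 \<le> i'" "i' < length x - 1"
  shows "contract2 x i i' = None"
proof (cases "contract x i")
  case (Some v)
  obtain p a b s c where x: "x = p @ a # b # s" and lp: "length p = i - 1"
    and c: "lmult a b = Some c" and v: "v = p @ c # s"
    using contract_SomeE[OF assms(1,2) Some] .
  have "contract v i' = None"
  proof (cases "i' = i - 1")
    case True
    then obtain p' y where "p = p' @ [y]"
      using assms lp by (cases p rule: rev_cases) auto
    then show ?thesis
      using contract_append[of p' y c s] v lp True lmult_product_absorbing(2)[OF c] by simp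
  next
    case False
    then obtain z s' where "s = z # s'"
      using assms x lp by (cases s) auto
    then show ?thesis
      using contract_append[of p c z s'] v lp False assms lmult_product_absorbing(1)[OF c] by simp
  qed
  then show ?thesis
    using Some by (simp add: contract2_def)
qed (simp add: contract2_def)

text \<open>A sign-reversing involution on a finite index set makes a sum vanish (here \<open>2 \<noteq> 0\<close>
  is used, since fixed points are not excluded).\<close>

lemma sum_sign_reversing_involution:
  fixes f :: "'a \<Rightarrow> 'k::field"
  assumes two: "(2::'k) \<noteq> 0" and "finite A"
    and inv: "\<And>p. p \<in> A \<Longrightarrow> \<tau> p \<in> A \<and> \<tau> (\<tau> p) = p"
    and neg: "\<And>p. p \<in> A \<Longrightarrow> f (\<tau> p) = - f p"
  shows "sum f A = 0"
proof -
  have "bij_betw \<tau> A A"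
    by (rule bij_betw_byWitness[where f' = \<tau>]) (use inv in auto)
  then have "sum f A = sum (f \<circ> \<tau>) A"
    using sum.reindex_bij_betw[of \<tau> A A f] by simp
  also have "\<dots> = - sum f A"
    using neg by (simp add: sum_negf[symmetric])
  finally have "2 * sum f A = 0"
    by (simp add: algebra_simps)
  then show ?thesis
    using two by simp
qed

definition signed_contract2 :: "letter list \<Rightarrow> letter list \<Rightarrow> nat \<times> nat \<Rightarrow> 'k::field" where
  "signed_contract2 x w = (\<lambda>(i, i'). if contract2 x i i' = Some w then (-1) ^ (i + i') else 0)"

lemma incidence_product_sum:
  assumes "valid_word x" "length x = Suc (Suc (length w))"
  shows "(\<Sum>v\<in>{v. length v = Suc (length w) \<and> valid_word v}. incidence x v * incidence v w)
       = (\<Sum>ij\<in>{1..<length x} \<times> {1..<length x - 1}. signed_contract2 x w ij :: 'k::field)"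
proof -
  define V where "V = {v. length v = Suc (length w) \<and> valid_word v}"
  have "(\<Sum>v\<in>V. incidence x v * incidence v w)
      = (\<Sum>v\<in>V. \<Sum>i\<in>{1..<length x}. if contract x i = Some v then (-1) ^ i * incidence v w else (0::'k))"
    unfolding incidence_def[of x] by (auto simp: sum_distrib_right intro!: sum.cong)
  also have "\<dots> = (\<Sum>i\<in>{1..<length x}. \<Sum>v\<in>V. if contract x i = Some v then (-1) ^ i * incidence v w else 0)"
    by (rule sum.swap)
  also have "\<dots> = (\<Sum>i\<in>{1..<length x}. \<Sum>i'\<in>{1..<length x - 1}. signed_contract2 x w (i, i'))"
  proof (rule sum.cong[OF refl])
    fix i assume i: "i \<in> {1..<length x}"
    show "(\<Sum>v\<in>V. if contract x i = Some v then (-1) ^ i * incidence v w else 0)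
        = (\<Sum>i'\<in>{1..<length x - 1}. signed_contract2 x w (i, i'))"
    proof (cases "contract x i")
      case None
      then show ?thesis
        by (simp add: signed_contract2_def contract2_def)
    next
      case (Some v)
      then have v: "v \<in> V" "length v = length x - 1"
        using contract_preserves[of i x v] i assms unfolding V_def by auto
      have "(\<Sum>u\<in>V. if contract x i = Some u then (-1) ^ i * incidence u w else 0)
          = (-1) ^ i * incidence v w"
        using Some v(1) by (simp add: V_def finite_words_of_length)
      also have "\<dots> = (\<Sum>i'\<in>{1..<length x - 1}. signed_contract2 x w (i, i'))"
        unfolding incidence_def v(2) sum_distrib_left
        by (rule sum.cong) (simp_all add: Some signed_contract2_def contract2_def power_add)
      finally show ?thesis .
    qed
  qed
  also have "\<dots> = (\<Sum>ij\<in>{1..<length x} \<times> {1..<length x - 1}. signed_contract2 x w ij)"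
    by (simp add: sum.cartesian_product)
  finally show ?thesis
    unfolding V_def .
qed

text \<open>Exchanging the order of two contractions at disjoint positions: this involution
  reverses the sign of \<open>signed_contract2\<close>; its fixed points are overlapping pairs.\<close>

definition reorder_pair :: "nat \<times> nat \<Rightarrow> nat \<times> nat" where
  "reorder_pair = (\<lambda>(i, i'). if i' + 2 \<le> i then (i', i - 1) else if i < i' then (Suc i', i) else (i, i'))"

lemma signed_contract2_reorder_pair:
  assumes "ij \<in> {1..<length x} \<times> {1..<length x - 1}"
  shows "signed_contract2 x w (reorder_pair ij) = - (signed_contract2 x w ij :: 'k::field)"
proof -
  have swap: "signed_contract2 x w (i', i - 1) = - (signed_contract2 x w (i, i') :: 'k)"
    if "i' + 2 \<le> i" "1 \<le> i'" "i < length x" for i i'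
  proof -
    have "i + i' = Suc (i' + (i - 1))"
      using that by auto
    then have "(-1::'k) ^ (i' + (i - 1)) = - ((-1) ^ (i + i'))"
      by (simp only: power_Suc) simp
    then show ?thesis
      using contract2_commute[OF that(2,1,3)] by (simp add: signed_contract2_def)
  qed
  obtain i i' where ij: "ij = (i, i')" "1 \<le> i" "i < length x" "1 \<le> i'" "i' < length x - 1"
    using assms by auto
  consider "i' + 2 \<le> i" | "i < i'" | "i' = i - 1 \<or> i' = i"
    by linarith
  then show ?thesis
  proof cases
    case 1
    then show ?thesis using swap ij by (simp add: reorder_pair_def)
  next
    case 2
    then show ?thesis using swap[of i "Suc i'"] ij by (simp add: reorder_pair_def)
  next
    case 3
    then have "reorder_pair ij = ij"
      using ij by (auto simp: reorder_pair_def)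
    then show ?thesis
      using contract2_overlapping[of i x i'] 3 ij by (simp add: signed_contract2_def)
  qed
qed

lemma incidence_square_zero:
  assumes "(2::'k::field) \<noteq> 0" "valid_word x" "length x = Suc (Suc (length w))"
  shows "(\<Sum>v\<in>{v. length v = Suc (length w) \<and> valid_word v}. incidence x v * incidence v w) = (0::'k)"
  unfolding incidence_product_sum[OF assms(2,3)]
proof (rule sum_sign_reversing_involution[OF assms(1), where \<tau> = reorder_pair])
  fix ij assume "ij \<in> {1..<length x} \<times> {1..<length x - 1}"
  then show "reorder_pair ij \<in> {1..<length x} \<times> {1..<length x - 1} \<and> reorder_pair (reorder_pair ij) = ij"
    by (auto simp: reorder_pair_def)
qed (simp_all add: signed_contract2_reorder_pair)

theorem bdry_bdry:
  assumes "(2::'k::field) \<noteq> 0"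
  shows "bdry (bdry (c :: letter list \<Rightarrow> 'k)) = (\<lambda>_. 0)"
proof
  fix w :: "letter list"
  define V where "V = {v. length v = Suc (length w) \<and> valid_word v}"
  define W where "W = {x. length x = Suc (Suc (length w)) \<and> valid_word x}"
  have "bdry (bdry c) w = (\<Sum>v\<in>V. (\<Sum>x\<in>W. c x * incidence x v) * incidence v w)"
    unfolding bdry_def V_def W_def by (rule sum.cong) auto
  also have "\<dots> = (\<Sum>x\<in>W. c x * (\<Sum>v\<in>V. incidence x v * incidence v w))"
    by (simp add: sum_distrib_left sum_distrib_right mult.assoc sum.swap[of _ V])
  also have "\<dots> = 0"
    using incidence_square_zero[OF assms] unfolding W_def V_def by (intro sum.neutral) auto
  finally show "bdry (bdry c) w = 0" .
qed

section \<open>Linear structure of chains, cycles and boundaries\<close>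

lemma bdry_add: "bdry (\<lambda>w. c1 w + c2 w) = (\<lambda>w. bdry c1 w + bdry (c2 :: letter list \<Rightarrow> 'k::field) w)"
  unfolding bdry_def by (simp add: distrib_right sum.distrib)

lemma bdry_diff: "bdry (\<lambda>w. c1 w - c2 w) = (\<lambda>w. bdry c1 w - bdry (c2 :: letter list \<Rightarrow> 'k::field) w)"
  unfolding bdry_def by (simp add: left_diff_distrib sum_subtractf)

lemma bdry_smult: "bdry (\<lambda>w. a * c w) = (\<lambda>w. a * bdry (c :: letter list \<Rightarrow> 'k::field) w)"
  unfolding bdry_def by (simp add: sum_distrib_left mult.assoc)

lemma chains_add: "c1 \<in> chains n m \<Longrightarrow> c2 \<in> chains n m \<Longrightarrow> (\<lambda>w. c1 w + c2 w) \<in> chains n m"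
  unfolding chains_def by force

lemma chains_diff: "c1 \<in> chains n m \<Longrightarrow> c2 \<in> chains n m \<Longrightarrow> (\<lambda>w. c1 w - c2 w) \<in> chains n m"
  unfolding chains_def by force

lemma chains_smult: "c \<in> chains n m \<Longrightarrow> (\<lambda>w. a * c w) \<in> chains n m"
  unfolding chains_def by simp

lemma chains_zero: "(\<lambda>w. 0) \<in> chains n m"
  unfolding chains_def by simp

lemma bdry_chains:
  fixes c :: "letter list \<Rightarrow> 'k::field"
  assumes "c \<in> chains (Suc n) m"
  shows "bdry c \<in> chains n m"
  unfolding chains_def mem_Collect_eq
proof (intro allI impI)
  fix w assume "bdry c w \<noteq> 0"
  then obtain v where v: "length v = Suc (length w)" and "c v \<noteq> 0" "incidence v w \<noteq> (0::'k)"
    unfolding bdry_def by (auto elim: sum.not_neutral_contains_not_neutral)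
  then have vb: "v \<in> basis_words (Suc n) m"
    using assms unfolding chains_def by blast
  from \<open>incidence v w \<noteq> 0\<close> obtain i where i: "i \<in> {1..<length v}" "contract v i = Some w"
    unfolding incidence_def by (auto elim: sum.not_neutral_contains_not_neutral split: if_splits)
  then have "valid_word w = valid_word v \<and> length w = length v - 1 \<and> word_deg w = word_deg v"
    by (intro contract_preserves) auto
  then show "w \<in> basis_words n m"
    using vb unfolding basis_words_def by auto
qed

lemma boundaries_add:
  "x \<in> boundaries n m \<Longrightarrow> y \<in> boundaries n m \<Longrightarrow> (\<lambda>w. x w + y w) \<in> boundaries n m"
  unfolding boundaries_def by (auto simp: image_iff bdry_add[symmetric] intro: chains_add)

lemma boundaries_diff:
  "x \<in> boundaries n m \<Longrightarrow> y \<in> boundaries n m \<Longrightarrow> (\<lambda>w. x w - y w) \<in> boundaries n m"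
  unfolding boundaries_def by (auto simp: image_iff bdry_diff[symmetric] intro: chains_diff)

lemma boundaries_smult: "x \<in> boundaries n m \<Longrightarrow> (\<lambda>w. a * x w) \<in> boundaries n m"
  unfolding boundaries_def by (auto simp: image_iff bdry_smult[symmetric] intro: chains_smult)

lemma boundaries_zero: "(\<lambda>w. 0::'k::field) \<in> boundaries n m"
proof -
  have "bdry (\<lambda>w. 0) = (\<lambda>w. 0::'k)"
    unfolding bdry_def by simp
  then show ?thesis
    unfolding boundaries_def using chains_zero by (metis image_eqI)
qed

lemma cycles_add: "x \<in> cycles n m \<Longrightarrow> y \<in> cycles n m \<Longrightarrow> (\<lambda>w. x w + y w) \<in> cycles n m"
  unfolding cycles_def by (simp add: chains_add bdry_add)

lemma cycles_diff: "x \<in> cycles n m \<Longrightarrow> y \<in> cycles n m \<Longrightarrow> (\<lambda>w. x w - y w) \<in> cycles n m"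
  unfolding cycles_def by (simp add: chains_diff bdry_diff)

lemma cycles_smult: "x \<in> cycles n m \<Longrightarrow> (\<lambda>w. a * x w) \<in> cycles n m"
  unfolding cycles_def by (simp add: chains_smult bdry_smult)

lemma cycles_zero: "(\<lambda>w. 0::'k::field) \<in> cycles n m"
  unfolding cycles_def bdry_def by (simp add: chains_zero)

section \<open>Computing homology\<close>

lemma hclass_eqI:
  assumes "(\<lambda>w. z1 w - z2 w) \<in> boundaries n m"
  shows "hclass n m z1 = (hclass n m z2 :: (letter list \<Rightarrow> 'k::field) set)"
proof -
  have "(\<lambda>w. z1 w - z w) \<in> boundaries n m \<longleftrightarrow> (\<lambda>w. z2 w - z w) \<in> boundaries n m"
    for z :: "letter list \<Rightarrow> 'k"
  proof
    assume "(\<lambda>w. z1 w - z w) \<in> boundaries n m"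
    from boundaries_diff[OF this assms] show "(\<lambda>w. z2 w - z w) \<in> boundaries n m"
      by simp
  next
    assume "(\<lambda>w. z2 w - z w) \<in> boundaries n m"
    from boundaries_add[OF this assms] show "(\<lambda>w. z1 w - z w) \<in> boundaries n m"
      by simp
  qed
  then show ?thesis
    unfolding hclass_def by blast
qed

lemma hclass_self: "z \<in> cycles n m \<Longrightarrow> z \<in> hclass n m (z :: letter list \<Rightarrow> 'k::field)"
  unfolding hclass_def using boundaries_zero by simp

lemma homology_zero_if_acyclic:
  assumes "\<And>z. z \<in> cycles n m \<Longrightarrow> (z :: letter list \<Rightarrow> 'k::field) \<in> boundaries n m"
  shows "homology_zero TYPE('k) n m"
proof -
  have "hclass n m z = (cycles n m :: (letter list \<Rightarrow> 'k) set)" if "z \<in> cycles n m" for z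
    unfolding hclass_def using assms boundaries_diff that by blast
  then have "(homology n m :: (letter list \<Rightarrow> 'k) set set) = {cycles n m}"
    unfolding homology_def using cycles_zero by blast
  then show ?thesis
    unfolding homology_zero_def by simp
qed

text \<open>First isomorphism theorem for a linear functional on the cycles whose kernel is
  exactly the space of boundaries and which takes the value \<open>1\<close> on some cycle.\<close>

lemma homology_iso_field_by_functional:
  fixes \<alpha> :: "(letter list \<Rightarrow> 'k::field) \<Rightarrow> 'k"
  assumes c: "c \<in> cycles n m" "\<alpha> c = 1"
    and add: "\<And>x y. x \<in> cycles n m \<Longrightarrow> y \<in> cycles n m \<Longrightarrow> \<alpha> (\<lambda>w. x w + y w) = \<alpha> x + \<alpha> y"
    and smult: "\<And>a x. x \<in> cycles n m \<Longrightarrow> \<alpha> (\<lambda>w. a * x w) = a * \<alpha> x"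
    and kernel: "\<And>z. z \<in> cycles n m \<Longrightarrow> z \<in> boundaries n m \<longleftrightarrow> \<alpha> z = 0"
  shows "homology_iso_field TYPE('k) n m"
proof -
  have diff: "\<alpha> (\<lambda>w. x w - y w) = \<alpha> x - \<alpha> y" if "x \<in> cycles n m" "y \<in> cycles n m" for x y
    using add[OF that(1) cycles_smult[OF that(2), of "-1"]] smult[OF that(2), of "-1"] by simp
  define \<phi> where "\<phi> S = \<alpha> (SOME z. z \<in> S)" for S :: "(letter list \<Rightarrow> 'k) set"
  have \<phi>: "\<phi> (hclass n m z) = \<alpha> z" if z: "z \<in> cycles n m" for z
  proof -
    have "(SOME z'. z' \<in> hclass n m z) \<in> hclass n m z"
      using hclass_self[OF z] by (rule someI[where P = "\<lambda>z'. z' \<in> hclass n m z"])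
    then have "\<alpha> (\<lambda>w. z w - (SOME z'. z' \<in> hclass n m z) w) = 0"
      and "(SOME z'. z' \<in> hclass n m z) \<in> cycles n m"
      using kernel cycles_diff z unfolding hclass_def by blast+
    then show ?thesis
      unfolding \<phi>_def using diff[OF z] by simp
  qed
  have "inj_on \<phi> (homology n m)"
  proof (rule inj_onI)
    fix S1 S2 assume "S1 \<in> homology n m" "S2 \<in> homology n m" "\<phi> S1 = \<phi> S2"
    then obtain z1 z2 where z: "z1 \<in> cycles n m" "z2 \<in> cycles n m"
      and S: "S1 = hclass n m z1" "S2 = hclass n m z2" "\<alpha> z1 = \<alpha> z2"
      unfolding homology_def using \<phi> by auto
    then have "(\<lambda>w. z1 w - z2 w) \<in> boundaries n m"
      using kernel[OF cycles_diff[OF z]] diff[OF z] by simp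
    then show "S1 = S2"
      unfolding S by (rule hclass_eqI)
  qed
  moreover have "\<phi> ` homology n m = UNIV"
  proof (intro set_eqI iffI UNIV_I)
    fix a :: 'k
    have "(\<lambda>w. a * c w) \<in> cycles n m" "\<alpha> (\<lambda>w. a * c w) = a"
      using cycles_smult[OF c(1)] smult[OF c(1)] c(2) by auto
    then show "a \<in> \<phi> ` homology n m"
      unfolding homology_def using \<phi> by (metis image_eqI)
  qed
  ultimately show ?thesis
    unfolding homology_iso_field_def bij_betw_def
    by (intro exI[of _ \<phi>]) (simp add: \<phi> add smult cycles_add cycles_smult)
qed

lemma homology_iso_field_if_generator:
  fixes c :: "letter list \<Rightarrow> 'k::field"
  assumes c: "c \<in> cycles n m"
    and spans: "\<And>z. z \<in> cycles n m \<Longrightarrow> \<exists>a. (\<lambda>w. z w - a * c w) \<in> boundaries n m"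
    and independent: "\<And>a. (\<lambda>w. a * c w) \<in> boundaries n m \<Longrightarrow> a = 0"
  shows "homology_iso_field TYPE('k) n m"
proof -
  have unique: "a = a'" if "(\<lambda>w. z w - a * c w) \<in> boundaries n m"
    "(\<lambda>w. z w - a' * c w) \<in> boundaries n m" for z a a'
  proof -
    have "(\<lambda>w. (a' - a) * c w) \<in> boundaries n m"
      using boundaries_diff[OF that] by (simp add: algebra_simps)
    then show ?thesis
      using independent by fastforce
  qed
  define \<alpha> where "\<alpha> z = (THE a. (\<lambda>w. z w - a * c w) \<in> boundaries n m)" for z
  have \<alpha>_eq: "\<alpha> z = a" if "(\<lambda>w. z w - a * c w) \<in> boundaries n m" for z a
    unfolding \<alpha>_def using that unique by blast
  have \<alpha>: "(\<lambda>w. z w - \<alpha> z * c w) \<in> boundaries n m" if "z \<in> cycles n m" for z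
    using spans[OF that] \<alpha>_eq by metis
  show ?thesis
  proof (rule homology_iso_field_by_functional[OF c, where \<alpha> = \<alpha>])
    show "\<alpha> c = 1"
      by (rule \<alpha>_eq) (simp add: boundaries_zero)
  next
    fix x y :: "letter list \<Rightarrow> 'k"
    assume "x \<in> cycles n m" "y \<in> cycles n m"
    from boundaries_add[OF \<alpha>[OF this(1)] \<alpha>[OF this(2)]]
    show "\<alpha> (\<lambda>w. x w + y w) = \<alpha> x + \<alpha> y"
      by (intro \<alpha>_eq) (simp add: algebra_simps)
  next
    fix a and x :: "letter list \<Rightarrow> 'k"
    assume "x \<in> cycles n m"
    from boundaries_smult[OF \<alpha>[OF this], of a]
    show "\<alpha> (\<lambda>w. a * x w) = a * \<alpha> x"
      by (intro \<alpha>_eq) (simp add: algebra_simps)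
  next
    fix z :: "letter list \<Rightarrow> 'k"
    assume "z \<in> cycles n m"
    show "z \<in> boundaries n m \<longleftrightarrow> \<alpha> z = 0"
      using \<alpha>[OF \<open>z \<in> cycles n m\<close>] \<alpha>_eq[of z 0] by auto
  qed
qed

section \<open>A Morse matching on the basis words\<close>

text \<open>The periodic word \<open>\<eta> \<xi> \<theta> \<xi>_L \<eta> \<xi> \<theta> \<xi>_L \<dots>\<close>: it is composable and no two adjacent
  letters have a nonzero product, so its initial segments will be the only critical words.\<close>

definition pattern_letter :: "nat \<Rightarrow> letter" where
  "pattern_letter q =
     (if q mod 4 = 0 then Eta else if q mod 4 = 1 then Xi else if q mod 4 = 2 then Theta else XiL)"

lemma pattern_letter_composable: "ridem (pattern_letter q) = lidem (pattern_letter (Suc q))"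
  by (auto simp: pattern_letter_def mod_Suc)

lemma pattern_letter_no_products: "lmult (pattern_letter q) (pattern_letter (Suc q)) = None"
  by (auto simp: pattern_letter_def mod_Suc)

fun pattern_prefix_from :: "nat \<Rightarrow> letter list \<Rightarrow> nat" where
  "pattern_prefix_from k [] = 0"
| "pattern_prefix_from k (a # xs) =
     (if a = pattern_letter k then Suc (pattern_prefix_from (Suc k) xs) else 0)"

definition pattern_prefix :: "letter list \<Rightarrow> nat" where
  "pattern_prefix xs = pattern_prefix_from 0 xs"

lemma pattern_prefix_from_props:
  "pattern_prefix_from k xs \<le> length xs \<and>
   (\<forall>q < pattern_prefix_from k xs. xs ! q = pattern_letter (k + q)) \<and>
   (pattern_prefix_from k xs < length xs \<longrightarrow>
      xs ! pattern_prefix_from k xs \<noteq> pattern_letter (k + pattern_prefix_from k xs))"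
proof (induction xs arbitrary: k)
  case (Cons a xs)
  show ?case
  proof (cases "a = pattern_letter k")
    case True
    have "\<forall>q < Suc (pattern_prefix_from (Suc k) xs). (a # xs) ! q = pattern_letter (k + q)"
      using Cons.IH[of "Suc k"] True by (auto simp: nth_Cons split: nat.split)
    then show ?thesis
      using Cons.IH[of "Suc k"] True by auto
  qed auto
qed simp

lemma pattern_prefix_le: "pattern_prefix xs \<le> length xs"
  using pattern_prefix_from_props[of 0 xs] unfolding pattern_prefix_def by simp

lemma pattern_prefix_nth: "q < pattern_prefix xs \<Longrightarrow> xs ! q = pattern_letter q"
  using pattern_prefix_from_props[of 0 xs] unfolding pattern_prefix_def by simp

lemma pattern_prefix_mismatch:
  "pattern_prefix xs < length xs \<Longrightarrow> xs ! pattern_prefix xs \<noteq> pattern_letter (pattern_prefix xs)"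
  using pattern_prefix_from_props[of 0 xs] unfolding pattern_prefix_def by simp

lemma pattern_prefix_eqI:
  assumes "j \<le> length xs" "\<And>q. q < j \<Longrightarrow> xs ! q = pattern_letter q"
    "j < length xs \<Longrightarrow> xs ! j \<noteq> pattern_letter j"
  shows "pattern_prefix xs = j"
proof (rule ccontr)
  assume "pattern_prefix xs \<noteq> j"
  then consider "pattern_prefix xs < j" | "j < pattern_prefix xs"
    by linarith
  then show False
  proof cases
    case 1
    then show False
      using assms(1,2) pattern_prefix_mismatch[of xs] by simp
  next
    case 2
    then show False
      using assms(3) pattern_prefix_le[of xs] pattern_prefix_nth[of j xs] by simp
  qed
qed

text \<open>In a valid word, the first letter that deviates from the pattern starts at the same
  idempotent as the pattern letter it replaces: it is its unique "partner" with the same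
  left idempotent.\<close>

lemma lidem_pattern_prefix:
  assumes "valid_word v" "pattern_prefix v < length v"
  shows "lidem (v ! pattern_prefix v) = lidem (pattern_letter (pattern_prefix v))"
proof (cases "pattern_prefix v")
  case 0
  then show ?thesis
    using assms(1) by (auto simp: valid_word_def hd_conv_nth pattern_letter_def)
next
  case (Suc j)
  then have "ridem (v ! j) = lidem (v ! pattern_prefix v)"
    using assms unfolding valid_word_def by auto
  then show ?thesis
    using Suc pattern_prefix_nth[of j v] pattern_letter_composable[of j] by simp
qed

text \<open>The pairs
  \<open>(u, expand u)\<close> form an acyclic matching of the basis words.\<close>

definition expandable :: "letter list \<Rightarrow> bool" where
  "expandable u \<longleftrightarrow> pattern_prefix u < length u \<and>
     ((pattern_prefix u mod 4 = 0 \<and> u ! pattern_prefix u = XiL) \<or>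
      (pattern_prefix u mod 4 = 2 \<and> u ! pattern_prefix u = Xi))"

definition expand :: "letter list \<Rightarrow> letter list" where
  "expand u = take (pattern_prefix u) u
     @ (if u ! pattern_prefix u = XiL then [Eta, Theta] else [Theta, Eta])
     @ drop (Suc (pattern_prefix u)) u"

lemma expand_props:
  assumes "expandable u"
  shows "contract (expand u) (Suc (pattern_prefix u)) = Some u"
    and "pattern_prefix (expand u) = Suc (pattern_prefix u)"
    and "\<not> expandable (expand u)"
    and "length (expand u) = Suc (length u)"
    and "valid_word (expand u) = valid_word u"
    and "word_deg (expand u) = word_deg u"
proof -
  define j where "j = pattern_prefix u"
  have jl: "j < length u" and uj: "(j mod 4 = 0 \<and> u ! j = XiL) \<or> (j mod 4 = 2 \<and> u ! j = Xi)"
    using assms unfolding expandable_def j_def by auto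
  obtain a b where ab: "lmult a b = Some (u ! j)"
    and e: "expand u = take j u @ a # b # drop (Suc j) u"
    and a: "a = pattern_letter j" and b: "b \<noteq> pattern_letter (Suc j)"
    using uj unfolding expand_def j_def[symmetric] by (auto simp: pattern_letter_def mod_Suc)
  have u: "u = take j u @ u ! j # drop (Suc j) u" and lt: "length (take j u) = j"
    using jl by (simp_all add: id_take_nth_drop)
  show "contract (expand u) (Suc (pattern_prefix u)) = Some u"
    using contract_append[of "take j u" a b "drop (Suc j) u"] ab e lt u
    unfolding j_def[symmetric] by simp
  show pe: "pattern_prefix (expand u) = Suc (pattern_prefix u)"
    unfolding j_def[symmetric]
  proof (rule pattern_prefix_eqI)
    show "Suc j \<le> length (expand u)"
      using e jl by simp
    show "expand u ! q = pattern_letter q" if "q < Suc j" for q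
      using that e lt a pattern_prefix_nth[of q u] j_def
      by (cases "q = j") (auto simp: nth_append)
    show "expand u ! Suc j \<noteq> pattern_letter (Suc j)"
      using e lt b by (simp add: nth_append)
  qed
  have "j mod 4 = 0 \<or> j mod 4 = 2"
    using uj by auto
  then have "Suc j mod 4 = 1 \<or> Suc j mod 4 = 3"
    by presburger
  then show "\<not> expandable (expand u)"
    unfolding expandable_def pe j_def[symmetric] by auto
  show "length (expand u) = Suc (length u)"
    using e jl by simp
  show "valid_word (expand u) = valid_word u"
    using valid_word_contract_iff[OF ab, of "take j u" "drop (Suc j) u"] e u by simp
  show "word_deg (expand u) = word_deg u"
    using word_deg_contract[OF ab, of "take j u" "drop (Suc j) u"] e u by simp
qed

text \<open>This is the triangularity that makes the
  matching acyclic.\<close>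

lemma contract_onto_expandable:
  assumes u: "expandable u" and i: "1 \<le> i" "i < length v" and c: "contract v i = Some u"
  shows "(i = Suc (pattern_prefix u) \<and> v = expand u)
    \<or> (pattern_prefix v < pattern_prefix u \<and> pattern_prefix v < length v)
    \<or> (expandable v \<and> pattern_prefix v = pattern_prefix u)"
proof -
  obtain p a b s c where v: "v = p @ a # b # s" and lp: "length p = i - 1"
    and ab: "lmult a b = Some c" and u_eq: "u = p @ c # s"
    using contract_SomeE[OF i c] .
  note abc = lmult_SomeD[OF ab]
  define j where "j = pattern_prefix u"
  have um: "\<And>q. q < j \<Longrightarrow> u ! q = pattern_letter q"
    unfolding j_def by (rule pattern_prefix_nth)
  have jl: "j < length u" and uj: "(j mod 4 = 0 \<and> u ! j = XiL) \<or> (j mod 4 = 2 \<and> u ! j = Xi)"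
    using u unfolding expandable_def j_def by auto
  consider "length p < j" | "length p = j" | "j < length p"
    by linarith
  then show ?thesis
  proof cases
    case 1
    then have "pattern_letter (length p) = c"
      using um[OF 1] u_eq by simp
    have "v ! q = pattern_letter q" if "q < length p" for q
      using v u_eq um[of q] that 1 by (simp add: nth_append)
    then have "pattern_prefix v = length p"
      using v \<open>pattern_letter (length p) = c\<close> abc by (intro pattern_prefix_eqI) auto
    then show ?thesis
      using 1 v unfolding j_def by simp
  next
    case 2
    have "take j u = p" "drop (Suc j) u = s" "u ! j = c"
      using u_eq 2 by auto
    then have "v = expand u"
      unfolding expand_def j_def[symmetric] using v abc by auto
    then show ?thesis
      using 2 lp i unfolding j_def by auto
  next
    case 3
    have vq: "v ! q = u ! q" if "q \<le> j" for q
      using v u_eq that 3 by (simp add: nth_append)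
    have "pattern_prefix v = j"
      using v 3 vq um uj by (intro pattern_prefix_eqI) (auto simp: pattern_letter_def)
    moreover have "j < length v"
      using v 3 by simp
    ultimately show ?thesis
      using uj vq[of j] unfolding expandable_def j_def by auto
  qed
qed

lemma incidence_expand:
  assumes "expandable w" "expandable w'" "pattern_prefix w' \<le> pattern_prefix w"
  shows "incidence (expand w) w' = (if w' = w then (-1) ^ Suc (pattern_prefix w) else (0::'k::field))"
proof -
  note e = expand_props[OF assms(1)] and e' = expand_props[OF assms(2)]
  have only: "i = Suc (pattern_prefix w) \<and> w' = w"
    if i: "1 \<le> i" "i < length (expand w)" and c: "contract (expand w) i = Some w'" for i
  proof -
    have "i = Suc (pattern_prefix w') \<and> expand w = expand w'"
      using contract_onto_expandable[OF assms(2) i c] e(2,3) assms(3) by auto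
    moreover from this have "pattern_prefix w' = pattern_prefix w"
      using e(2) e'(2) by simp
    ultimately show ?thesis
      using e(1) e'(1) by (metis option.inject)
  qed
  have "incidence (expand w) w'
      = (\<Sum>i\<in>{1..<length (expand w)}. if i = Suc (pattern_prefix w) \<and> w' = w then (-1) ^ i else 0)"
    unfolding incidence_def using only e(1) by (intro sum.cong) auto
  moreover have "Suc (pattern_prefix w) < length (expand w)"
    using e(4) assms(1) unfolding expandable_def by simp
  ultimately show ?thesis
    by (cases "w' = w") simp_all
qed

lemma expandable_if_even_mismatch:
  assumes "valid_word v" "pattern_prefix v < length v"
    and "pattern_prefix v mod 4 = 0 \<or> pattern_prefix v mod 4 = 2"
  shows "expandable v"
  using lidem_pattern_prefix[OF assms(1,2)] pattern_prefix_mismatch[OF assms(2)] assms(2,3)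
  unfolding expandable_def
  by (cases "v ! pattern_prefix v") (auto simp: pattern_letter_def)

lemma expansion_of_non_expandable:
  assumes v: "valid_word v" "pattern_prefix v < length v" and nexp: "\<not> expandable v"
  obtains u where "expandable u" "v = expand u" "pattern_prefix u = pattern_prefix v - 1"
proof -
  define j where "j = pattern_prefix v"
  have jl: "j < length v"
    using v(2) unfolding j_def .
  have "\<not> (j mod 4 = 0 \<or> j mod 4 = 2)"
  proof
    assume "j mod 4 = 0 \<or> j mod 4 = 2"
    then show False
      using expandable_if_even_mismatch[OF v] nexp unfolding j_def by simp
  qed
  then have odd: "j mod 4 = 1 \<or> j mod 4 = 3"
    by presburger
  then obtain j' where j': "j = Suc j'"
    by (cases j) auto
  with odd have even: "j' mod 4 = 0 \<or> j' mod 4 = 2"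
    by presburger
  have prev: "v ! j' = pattern_letter j'"
    using pattern_prefix_nth[of j' v] j' unfolding j_def by simp
  have "lidem (v ! j) = lidem (pattern_letter (Suc j'))" "v ! j \<noteq> pattern_letter (Suc j')"
    using lidem_pattern_prefix[OF v] pattern_prefix_mismatch[OF v(2)] j' unfolding j_def by auto
  then have letters: "(j' mod 4 = 0 \<and> v ! j' = Eta \<and> v ! j = Theta)
      \<or> (j' mod 4 = 2 \<and> v ! j' = Theta \<and> v ! j = Eta)"
    using even prev by (cases "v ! j") (auto simp: pattern_letter_def mod_Suc)
  then obtain c where "lmult (v ! (j - 1)) (v ! j) = Some c"
    using j' by auto
  then obtain u where cu: "contract v j = Some u"
    unfolding contract_def by auto
  have j1: "1 \<le> j"
    using j' by simp
  obtain p a b s c' where ve: "v = p @ a # b # s" and "length p = j - 1"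
    and ab: "lmult a b = Some c'" and ue: "u = p @ c' # s"
    using contract_SomeE[OF j1 jl cu] .
  then have lp: "length p = j'"
    using j' by simp
  have ab_v: "a = v ! j'" "b = v ! j"
    using ve lp j' by (simp_all add: nth_append)
  have c': "(j' mod 4 = 0 \<and> c' = XiL) \<or> (j' mod 4 = 2 \<and> c' = Xi)"
    using letters ab ab_v j' by auto
  have pu: "pattern_prefix u = j'"
  proof (rule pattern_prefix_eqI)
    show "j' \<le> length u"
      using ue lp by simp
    show "u ! q = pattern_letter q" if "q < j'" for q
      using that ue ve lp pattern_prefix_nth[of q v] j' unfolding j_def by (simp add: nth_append)
    show "u ! j' \<noteq> pattern_letter j'"
      using ue lp c' by (auto simp: pattern_letter_def)
  qed
  have eu: "expandable u"
    unfolding expandable_def pu using ue lp c' by auto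
  have "v = expand u"
    using contract_onto_expandable[OF eu j1 jl cu] pu nexp j' unfolding j_def by auto
  then show ?thesis
    using that eu pu j' unfolding j_def by simp
qed

section \<open>Reduction to critical words\<close>

definition expansion_chain :: "letter list set \<Rightarrow> (letter list \<Rightarrow> 'k::field) \<Rightarrow> letter list \<Rightarrow> 'k" where
  "expansion_chain U f v = (\<Sum>w\<in>U. if v = expand w then f w else 0)"

lemma expansion_chain_chains:
  assumes "finite U" "\<And>w. w \<in> U \<Longrightarrow> expandable w \<and> w \<in> basis_words n m"
  shows "expansion_chain U f \<in> chains (Suc n) m"
  unfolding chains_def mem_Collect_eq
proof (intro allI impI)
  fix v assume "expansion_chain U f v \<noteq> 0"
  then obtain w where "w \<in> U" "v = expand w"
    unfolding expansion_chain_def by (auto elim: sum.not_neutral_contains_not_neutral split: if_splits)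
  then show "v \<in> basis_words (Suc n) m"
    using assms(2) expand_props[of w] unfolding basis_words_def by auto
qed

lemma bdry_expansion_chain:
  fixes f :: "letter list \<Rightarrow> 'k::field"
  assumes "finite U"
    and U: "\<And>w. w \<in> U \<Longrightarrow> expandable w \<and> valid_word w \<and> pattern_prefix w = k"
    and w': "expandable w'" "pattern_prefix w' \<le> k"
  shows "bdry (expansion_chain U f) w' = (if w' \<in> U then (-1) ^ Suc k * f w' else 0)"
proof -
  define V where "V = {v. length v = Suc (length w') \<and> valid_word v}"
  have "bdry (expansion_chain U f) w' = (\<Sum>v\<in>V. \<Sum>w\<in>U. if v = expand w then f w * incidence v w' else 0)"
    unfolding bdry_def expansion_chain_def V_def sum_distrib_right
    by (intro sum.cong) auto
  also have "\<dots> = (\<Sum>w\<in>U. \<Sum>v\<in>V. if v = expand w then f w * incidence v w' else 0)"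
    by (rule sum.swap)
  also have "\<dots> = (\<Sum>w\<in>U. if w = w' then (-1) ^ Suc k * f w' else 0)"
  proof (rule sum.cong[OF refl])
    fix w assume "w \<in> U"
    then have w: "expandable w" "valid_word w" "pattern_prefix w = k"
      using U by auto
    have inc: "incidence (expand w) w' = (if w' = w then (-1) ^ Suc k else (0::'k))"
      using incidence_expand[OF w(1) w'(1)] w'(2) unfolding w(3) by simp
    have "expand w \<in> V" if "w = w'"
      using expand_props[OF w(1)] w(2) that unfolding V_def by auto
    then show "(\<Sum>v\<in>V. if v = expand w then f w * incidence v w' else 0)
        = (if w = w' then (-1) ^ Suc k * f w' else 0)"
      using inc by (auto simp: V_def finite_words_of_length)
  qed
  also have "\<dots> = (if w' \<in> U then (-1) ^ Suc k * f w' else 0)"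
    using assms(1) by simp
  finally show ?thesis .
qed

text \<open>Every chain is homologous to one vanishing on all expandable words deviating before
  position \<open>k\<close>: induction on \<open>k\<close>, cancelling at each step the coefficients at position \<open>k\<close>
  by the boundary of an expansion chain.\<close>

lemma reduce_on_expandable_below:
  assumes z: "z \<in> chains n m"
  shows "\<exists>b \<in> chains (Suc n) m. \<forall>w. expandable w \<and> pattern_prefix w < k \<longrightarrow> z w = bdry b w"
proof (induction k)
  case 0
  show ?case
    using chains_zero by blast
next
  case (Suc k)
  then obtain b where b: "b \<in> chains (Suc n) m"
    and below: "\<forall>w. expandable w \<and> pattern_prefix w < k \<longrightarrow> z w = bdry b w"
    by blast
  define r where "r = (\<lambda>w. z w - bdry b w)"
  have r: "r \<in> chains n m"
    unfolding r_def by (rule chains_diff[OF z bdry_chains[OF b]])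
  define U where "U = {w \<in> basis_words n m. expandable w \<and> pattern_prefix w = k}"
  define b' where "b' = expansion_chain U (\<lambda>w. (-1) ^ Suc k * r w)"
  have U: "finite U" "\<And>w. w \<in> U \<Longrightarrow> expandable w \<and> w \<in> basis_words n m"
    unfolding U_def using finite_basis_words by auto
  have bdry_b': "bdry b' w = (if w \<in> U then r w else 0)"
    if "expandable w" "pattern_prefix w \<le> k" for w
    using bdry_expansion_chain[OF U(1) _ that, of "\<lambda>w. (-1) ^ Suc k * r w"]
    unfolding b'_def U_def basis_words_def by (simp add: power_mult_distrib[symmetric])
  have "(\<lambda>v. b v + b' v) \<in> chains (Suc n) m"
    unfolding b'_def by (intro chains_add[OF b] expansion_chain_chains U)
  moreover have "z w = bdry (\<lambda>v. b v + b' v) w" if "expandable w" "pattern_prefix w < Suc k" for w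
  proof -
    have "w \<notin> basis_words n m \<Longrightarrow> r w = 0"
      using r unfolding chains_def by blast
    then show ?thesis
      using that below bdry_b'[of w] unfolding bdry_add r_def U_def
      by (cases "pattern_prefix w < k") auto
  qed
  ultimately show ?case
    by blast
qed

lemma reduce_on_expandable:
  assumes z: "z \<in> chains n m"
  obtains b where "b \<in> chains (Suc n) m" "\<And>w. expandable w \<Longrightarrow> z w = bdry b w"
proof -
  obtain b where b: "b \<in> chains (Suc n) m"
    and below: "\<forall>w. expandable w \<and> pattern_prefix w < Suc n \<longrightarrow> z w = bdry b w"
    using reduce_on_expandable_below[OF z] by blast
  have "z w = bdry b w" if "expandable w" for w
  proof (cases "w \<in> basis_words n m")
    case True
    then show ?thesis
      using below that pattern_prefix_le[of w] unfolding basis_words_def by auto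
  next
    case False
    then have "z w = 0" "bdry b w = 0"
      using z bdry_chains[OF b] unfolding chains_def by blast+
    then show ?thesis
      by simp
  qed
  then show ?thesis
    using that b by blast
qed

lemma incidence_onto_expandable:
  assumes "expandable u" "incidence y u \<noteq> (0::'k::field)"
  shows "y = expand u \<or> (pattern_prefix y < pattern_prefix u \<and> pattern_prefix y < length y)
    \<or> expandable y"
proof -
  obtain i where "i \<in> {1..<length y}" "contract y i = Some u"
    using assms(2) unfolding incidence_def
    by (auto elim: sum.not_neutral_contains_not_neutral split: if_splits)
  then show ?thesis
    using contract_onto_expandable[OF assms(1)] by fastforce
qed

text \<open>Otherwise take a nonzero non-critical
  word \<open>v\<close> deviating earliest; it is the expansion of an expandable \<open>u\<close>, and the coefficient of
  \<open>u\<close> in the boundary is \<open>\<plusminus>z v\<close>.\<close>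

lemma supported_on_pattern:
  fixes z :: "letter list \<Rightarrow> 'k::field"
  assumes z: "z \<in> chains n m" and zero: "\<And>w. expandable w \<Longrightarrow> z w = 0"
    and bdry_zero: "\<And>w. expandable w \<Longrightarrow> bdry z w = 0"
    and "z v \<noteq> 0"
  shows "pattern_prefix v = length v"
proof (rule ccontr)
  assume "pattern_prefix v \<noteq> length v"
  then have "pattern_prefix v < length v"
    using pattern_prefix_le[of v] by simp
  then obtain v0 where v0: "z v0 \<noteq> 0" "pattern_prefix v0 < length v0"
    and least: "\<And>y. z y \<noteq> 0 \<Longrightarrow> pattern_prefix y < length y \<Longrightarrow> pattern_prefix v0 \<le> pattern_prefix y"
    using ex_has_least_nat[of "\<lambda>y. z y \<noteq> 0 \<and> pattern_prefix y < length y" v pattern_prefix] \<open>z v \<noteq> 0\<close>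
    by blast
  have "valid_word v0"
    using v0 z unfolding chains_def basis_words_def by blast
  moreover have "\<not> expandable v0"
    using zero v0 by blast
  ultimately obtain u where u: "expandable u" "v0 = expand u" "pattern_prefix u = pattern_prefix v0 - 1"
    using expansion_of_non_expandable v0(2) by blast
  define V where "V = {y. length y = Suc (length u) \<and> valid_word y}"
  have v0V: "v0 \<in> V"
    using \<open>valid_word v0\<close> expand_props(4)[OF u(1)] u(2) unfolding V_def by simp
  have others: "z y * incidence y u = 0" if "y \<in> V - {v0}" for y
  proof (rule ccontr)
    assume "z y * incidence y u \<noteq> 0"
    then have "z y \<noteq> 0" "incidence y u \<noteq> (0::'k)"
      by auto
    moreover have "pattern_prefix u < pattern_prefix v0"
      using u(2,3) expand_props(2)[OF u(1)] by simp
    ultimately show False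
      using incidence_onto_expandable[OF u(1) \<open>incidence y u \<noteq> 0\<close>] least[of y] zero[of y] that u(2)
      by fastforce
  qed
  have "bdry z u = (\<Sum>y\<in>V. z y * incidence y u)"
    unfolding bdry_def V_def ..
  also have "\<dots> = z v0 * incidence v0 u + (\<Sum>y\<in>V - {v0}. z y * incidence y u)"
    using v0V by (intro sum.remove) (simp_all add: V_def finite_words_of_length)
  also have "\<dots> = z v0 * incidence v0 u"
    using others by (simp add: sum.neutral)
  also have "\<dots> = z v0 * (-1) ^ Suc (pattern_prefix u)"
    using incidence_expand[OF u(1) u(1), where 'k = 'k] u(2) by simp
  finally have "bdry z u \<noteq> 0"
    using v0(1) by simp
  then show False
    using bdry_zero[OF u(1)] by simp
qed

section \<open>The critical words\<close>

text \<open>The words that follow the pattern entirely; they are the unmatched cells.\<close>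

definition critical_word :: "nat \<Rightarrow> letter list" where
  "critical_word n = map pattern_letter [0..<n]"

lemma length_critical_word [simp]: "length (critical_word n) = n"
  unfolding critical_word_def by simp

lemma critical_word_nth: "q < n \<Longrightarrow> critical_word n ! q = pattern_letter q"
  unfolding critical_word_def by simp

lemma critical_word_not_expandable: "\<not> expandable (critical_word n)"
proof -
  have "pattern_prefix (critical_word n) = n"
    by (rule pattern_prefix_eqI) (auto simp: critical_word_nth)
  then show ?thesis
    unfolding expandable_def by simp
qed

lemma critical_wordI: "pattern_prefix v = length v \<Longrightarrow> v = critical_word (length v)"
  by (rule nth_equalityI) (auto simp: critical_word_nth pattern_prefix_nth)

text \<open>The pattern word of length \<open>n\<close> ends at \<open>id_O\<close> exactly when \<open>n \<equiv> 1, 2 (mod 4)\<close>; each block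
  \<open>\<eta> \<xi> \<theta> \<xi>_L\<close> has internal degree 3.\<close>

lemma valid_critical_word_iff: "valid_word (critical_word n) \<longleftrightarrow> n mod 4 = 1 \<or> n mod 4 = 2"
proof (cases n)
  case 0
  then show ?thesis
    unfolding valid_word_def critical_word_def by simp
next
  case (Suc n')
  have ne: "critical_word n \<noteq> []"
    using Suc length_critical_word[of n] by (metis list.size(3) nat.distinct(1))
  then have "lidem (hd (critical_word n)) = IdL" "last (critical_word n) = pattern_letter n'"
    using Suc by (simp_all add: hd_conv_nth last_conv_nth critical_word_nth pattern_letter_def)
  moreover have "ridem (pattern_letter n') = IdO \<longleftrightarrow> n mod 4 = 1 \<or> n mod 4 = 2"
    using Suc by (auto simp: pattern_letter_def mod_Suc)
  ultimately show ?thesis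
    unfolding valid_word_def using ne by (auto simp: critical_word_nth pattern_letter_composable)
qed

lemma word_deg_critical_word:
  "word_deg (critical_word n) = 3 * int (n div 4) + (if n mod 4 = 3 then 2 else int (n mod 4))"
proof (induction n)
  case (Suc n)
  have "word_deg (critical_word (Suc n)) = word_deg (critical_word n) + ldeg (pattern_letter n)"
    unfolding critical_word_def word_deg_def by simp
  then show ?case
    unfolding Suc by (auto simp: pattern_letter_def mod_Suc div_Suc)
qed (simp add: critical_word_def word_deg_def)

lemma critical_word_in_basis_iff:
  "critical_word n \<in> basis_words n (int n - int t) \<longleftrightarrow> n \<in> {4 * t + 1, 4 * t + 2}"
proof (cases "n mod 4 = 1 \<or> n mod 4 = 2")
  case True
  have "int n = 4 * int (n div 4) + int (n mod 4)"
    by (simp add: zdiv_int zmod_int)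
  moreover have "word_deg (critical_word n) = 3 * int (n div 4) + int (n mod 4)"
    using True word_deg_critical_word[of n] by auto
  ultimately show ?thesis
    unfolding basis_words_def using True valid_critical_word_iff[of n] by auto
next
  case False
  then have "n \<noteq> 4 * t + 1" "n \<noteq> 4 * t + 2"
    by presburger+
  then show ?thesis
    unfolding basis_words_def using False valid_critical_word_iff[of n] by auto
qed

text \<open>No two adjacent letters of a critical word multiply, so critical words are cycles.\<close>

lemma incidence_critical_word: "incidence (critical_word n) w = (0::'k::field)"
proof -
  have "contract (critical_word n) i = None" if "1 \<le> i" "i < n" for i
    using that pattern_letter_no_products[of "i - 1"]
    by (simp add: contract_def critical_word_nth)
  then show ?thesis
    unfolding incidence_def by (intro sum.neutral) auto
qed

lemma cycle_homologous_to_critical: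
  fixes z :: "letter list \<Rightarrow> 'k::field"
  assumes two: "(2::'k) \<noteq> 0" and z: "z \<in> cycles n m"
  obtains b where "b \<in> chains (Suc n) m" "\<And>w. w \<noteq> critical_word n \<Longrightarrow> z w = bdry b w"
proof -
  have zc: "z \<in> chains n m" and bz: "bdry z = (\<lambda>_. 0)"
    using z unfolding cycles_def by auto
  obtain b where b: "b \<in> chains (Suc n) m" and exp: "\<And>w. expandable w \<Longrightarrow> z w = bdry b w"
    using reduce_on_expandable[OF zc] by blast
  define r where "r = (\<lambda>w. z w - bdry b w)"
  have r: "r \<in> chains n m"
    unfolding r_def by (rule chains_diff[OF zc bdry_chains[OF b]])
  have "bdry r = (\<lambda>_. 0)"
    unfolding r_def bdry_diff bz bdry_bdry[OF two] by simp
  then have "pattern_prefix w = length w" if "r w \<noteq> 0" for w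
    using supported_on_pattern[OF r _ _ that] exp unfolding r_def by simp
  moreover have "length w = n" if "r w \<noteq> 0" for w
    using r that unfolding chains_def basis_words_def by blast
  ultimately have "z w = bdry b w" if "w \<noteq> critical_word n" for w
    using critical_wordI that unfolding r_def by fastforce
  then show ?thesis
    using that b by blast
qed

lemma homology_zero_noncritical:
  assumes two: "(2::'k::field) \<noteq> 0" and "critical_word n \<notin> basis_words n m"
  shows "homology_zero TYPE('k) n m"
proof (rule homology_zero_if_acyclic)
  fix z :: "letter list \<Rightarrow> 'k"
  assume z: "z \<in> cycles n m"
  obtain b where b: "b \<in> chains (Suc n) m"
    and off: "\<And>w. w \<noteq> critical_word n \<Longrightarrow> z w = bdry b w"
    using cycle_homologous_to_critical[OF two z] by blast
  have "z (critical_word n) = 0" "bdry b (critical_word n) = 0"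
    using assms(2) z bdry_chains[OF b] unfolding cycles_def chains_def by blast+
  then have "z w = bdry b w" for w
    using off by (cases "w = critical_word n") simp_all
  then have "z = bdry b"
    by (rule ext)
  then show "z \<in> boundaries n m"
    unfolding boundaries_def using b by blast
qed

lemma boundary_zero_noncritical:
  fixes b :: "letter list \<Rightarrow> 'k::field"
  assumes two: "(2::'k) \<noteq> 0" and b: "b \<in> chains (Suc n) m"
    and exp: "\<And>w. expandable w \<Longrightarrow> bdry b w = 0"
    and "critical_word (Suc n) \<notin> basis_words (Suc n) m"
  shows "bdry b = (\<lambda>_. 0)"
proof -
  obtain e where e: "e \<in> chains (Suc (Suc n)) m" and be: "\<And>w. expandable w \<Longrightarrow> b w = bdry e w"
    using reduce_on_expandable[OF b] by blast
  define r where "r = (\<lambda>w. b w - bdry e w)"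
  have r: "r \<in> chains (Suc n) m"
    unfolding r_def by (rule chains_diff[OF b bdry_chains[OF e]])
  have br: "bdry r = bdry b"
    unfolding r_def bdry_diff bdry_bdry[OF two] by simp
  have "r w = 0" for w
  proof (rule ccontr)
    assume "r w \<noteq> 0"
    moreover from this have "pattern_prefix w = length w"
      using supported_on_pattern[OF r] be exp br unfolding r_def by simp
    ultimately show False
      using r critical_wordI[of w] assms(4) unfolding chains_def basis_words_def by fastforce
  qed
  then have "bdry r = (\<lambda>_. 0)"
    by (simp add: bdry_def)
  then show ?thesis
    using br by simp
qed

lemma homology_iso_critical:
  assumes two: "(2::'k::field) \<noteq> 0" and crit: "critical_word n \<in> basis_words n m"
    and noncrit: "critical_word (Suc n) \<notin> basis_words (Suc n) m"
  shows "homology_iso_field TYPE('k) n m"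
proof -
  define c :: "letter list \<Rightarrow> 'k" where "c = (\<lambda>w. if w = critical_word n then 1 else 0)"
  show ?thesis
  proof (rule homology_iso_field_if_generator)
    have zero: "c v * incidence v w = 0" for v w
      unfolding c_def by (simp add: incidence_critical_word)
    have "bdry c = (\<lambda>_. 0)"
      unfolding bdry_def by (intro ext sum.neutral ballI zero)
    then show "c \<in> cycles n m"
      unfolding cycles_def chains_def c_def using crit by simp
  next
    fix z :: "letter list \<Rightarrow> 'k"
    assume "z \<in> cycles n m"
    then obtain b where b: "b \<in> chains (Suc n) m"
      and off: "\<And>w. w \<noteq> critical_word n \<Longrightarrow> z w = bdry b w"
      using cycle_homologous_to_critical[OF two] by blast
    have "(\<lambda>w. z w - (z (critical_word n) - bdry b (critical_word n)) * c w) = bdry b"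
      using off unfolding c_def by fastforce
    then show "\<exists>a. (\<lambda>w. z w - a * c w) \<in> boundaries n m"
      unfolding boundaries_def using b by blast
  next
    fix a :: 'k
    assume "(\<lambda>w. a * c w) \<in> boundaries n m"
    then obtain b where b: "b \<in> chains (Suc n) m" and ac: "(\<lambda>w. a * c w) = bdry b"
      unfolding boundaries_def by blast
    have "bdry b w = 0" if "expandable w" for w
    proof -
      have "w \<noteq> critical_word n"
        using that critical_word_not_expandable by metis
      then show ?thesis
        using fun_cong[OF ac, of w] by (simp add: c_def)
    qed
    then have "bdry b = (\<lambda>_. 0)"
      using boundary_zero_noncritical[OF two b _ noncrit] by blast
    then show "a = 0"
      using fun_cong[OF ac, of "critical_word n"] by (simp add: c_def)
  qed
qed

theorem homology_line:
  assumes "(2::'k::field) \<noteq> 0"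
  shows "if n \<in> {4 * t + 1, 4 * t + 2} then homology_iso_field TYPE('k) n (int n - int t)
    else homology_zero TYPE('k) n (int n - int t)"
proof (cases "n \<in> {4 * t + 1, 4 * t + 2}")
  case True
  have "Suc n \<notin> {4 * Suc t + 1, 4 * Suc t + 2}"
    using True by auto
  then have "critical_word (Suc n) \<notin> basis_words (Suc n) (int n - int t)"
    using critical_word_in_basis_iff[of "Suc n" "Suc t"] by simp
  then show ?thesis
    using True homology_iso_critical[OF assms] critical_word_in_basis_iff by simp
next
  case False
  then show ?thesis
    using homology_zero_noncritical[OF assms] critical_word_in_basis_iff by simp
qed

theorem mainTheorem5:
  assumes "(2::'k::field) \<noteq> 0" and "(3::'k) \<noteq> 0"
  shows "\<forall>n::nat. n \<ge> 1 \<longrightarrow>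
     (if n \<in> {1, 2} then homology_iso_field TYPE('k) n (int n)
      else homology_zero TYPE('k) n (int n)) \<and>
     (if n \<in> {5, 6} then homology_iso_field TYPE('k) n (int n - 1)
      else homology_zero TYPE('k) n (int n - 1)) \<and>
     (if n \<in> {9, 10} then homology_iso_field TYPE('k) n (int n - 2)
      else homology_zero TYPE('k) n (int n - 2)) \<and>
     (if n \<in> {13, 14} then homology_iso_field TYPE('k) n (int n - 3)
      else homology_zero TYPE('k) n (int n - 3))"
proof -
  note line = homology_line[OF assms(1)]
  have lines: "{4 * 0 + 1, 4 * 0 + 2} = {1, 2 :: nat}" "{4 * 1 + 1, 4 * 1 + 2} = {5, 6 :: nat}"
    "{4 * 2 + 1, 4 * 2 + 2} = {9, 10 :: nat}" "{4 * 3 + 1, 4 * 3 + 2} = {13, 14 :: nat}"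
    by auto
  have t0: "if n \<in> {1, 2} then homology_iso_field TYPE('k) n (int n)
      else homology_zero TYPE('k) n (int n)" for n
    using line[of n 0] unfolding lines of_nat_0 diff_0_right .
  have t1: "if n \<in> {5, 6} then homology_iso_field TYPE('k) n (int n - 1)
      else homology_zero TYPE('k) n (int n - 1)" for n
    using line[of n 1] unfolding lines of_nat_1 .
  have t2: "if n \<in> {9, 10} then homology_iso_field TYPE('k) n (int n - 2)
      else homology_zero TYPE('k) n (int n - 2)" for n
    using line[of n 2] unfolding lines of_nat_numeral .
  have t3: "if n \<in> {13, 14} then homology_iso_field TYPE('k) n (int n - 3)
      else homology_zero TYPE('k) n (int n - 3)" for n
    using line[of n 3] unfolding lines of_nat_numeral .
  show ?thesis
    by (intro allI impI conjI t0 t1 t2 t3)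
qed

end
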